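(* Let $C,w,n_{\max}>0$ and $\epsilon\in(0,10^{-3})$. There is $R_2>0$ depending on $C,w,n_{\max}$ such that if $I$ is an interval of length $R\ge R_2$ the following holds. Suppose $\mathcal{P}=\{J_1,\dots,J_{n_0},J^{(1)}_1,\dots,J^{(1)}_{n_1},\dots,J^{(m)}_1,\dots,J^{(m)}_{n_m}\}$ is a partition of $I$ into intervals with disjoint interiors, with $n_i\le n_{\max}$ for all $i\ge1$, and let $\mathcal{P}_b=\{J^{(p)}_i:1\le p\le m,1\le i\le n_p\}$. Suppose (1) $\sum_{J\in\mathcal{P}_b}l(J)\ge(1-\epsilon)R$; and (2) for any $J^{(p)}_i,J^{(q)}_j\in\mathcal{P}_b$ with $p\ne q$, $$d(J^{(p)}_i,J^{(q)}_j)\ge\max\Big(R_2,\;C\min\big(l(J^{(p)}_i),l(J^{(q)}_j)\big)^{1+w}\Big).$$ Then there exists $J^{(j_0)}_{i_0}\in\mathcal{P}_b$ with $l(J^{(j_0)}_{i_0})\ge\frac{1}{32n_{\max}}R$ and $\sum_{i=1}^{n_{j_0}}l(J^{(j_0)}_i)\ge\frac34R$.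
   Context: $l(J)$ is the length of the interval $J$, and $d(J,J')$ is the distance between two disjoint intervals (the infimum of $|s-t|$, $s\in J$, $t\in J'$). *)

theory Defs
  imports "HOL-Analysis.Analysis"
begin

text \<open>A closed real interval is represented by the pair of its endpoints (a, b), a < b.\<close>

definition ivl :: "real \<times> real \<Rightarrow> real set" where
  "ivl J = {fst J .. snd J}"

definition ivl_interior :: "real \<times> real \<Rightarrow> real set" where
  "ivl_interior J = {fst J <..< snd J}"

definition len :: "real \<times> real \<Rightarrow> real" where
  "len J = snd J - fst J"

definition ivl_dist :: "real \<times> real \<Rightarrow> real \<times> real \<Rightarrow> real" where
  "ivl_dist J J' = Inf {\<bar>s - t\<bar> | s t. s \<in> ivl J \<and> t \<in> ivl J'}"

text \<open>Index set of the partition: Inl i (i < n0) for J_{i+1}, Inr (p,i) (p < m, i < n p)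
  for J^{(p+1)}_{i+1}.\<close>
definition part_idx :: "nat \<Rightarrow> nat \<Rightarrow> (nat \<Rightarrow> nat) \<Rightarrow> (nat + nat \<times> nat) set" where
  "part_idx n0 m n = Inl ` {..<n0} \<union> {Inr (p, i) | p i. p < m \<and> i < n p}"

definition part_fam :: "(nat \<Rightarrow> real \<times> real) \<Rightarrow> (nat \<Rightarrow> nat \<Rightarrow> real \<times> real)
    \<Rightarrow> nat + nat \<times> nat \<Rightarrow> real \<times> real" where
  "part_fam G B k = (case k of Inl i \<Rightarrow> G i | Inr (p, i) \<Rightarrow> B p i)"

end

theory Submission
  imports Defs
begin

(* Represent every cluster by its longest interval, with left endpoint x_p and length M_p: the
  whole cluster has length at most nmax * M_p, and distinct points x_p, x_q lie in an interval of
  length R at distance at least max(R2, C min(M_p, M_q)^(1+w)).  Once R is large, two clusters with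
  M >= R/(160 nmax) would be more than R apart, so at most one cluster is heavy.  For the light
  clusters, those with M in [y, 2y) are C y^(1+w)-separated, hence at most R/(C y^(1+w)) + 1 in
  number; summing over y = a 2^j gives a geometric series, and those with M < a are
  R2-separated.  With a = R2/(160 nmax) the light clusters have total length at most R/20, so the
  heavy one carries at least 3R/4. *)

lemma card_mult_sep_le:
  fixes X :: "real set"
  assumes "finite X" "X \<subseteq> {s..t}" "s \<le> t" "0 \<le> D"
    and "\<And>x y. x \<in> X \<Longrightarrow> y \<in> X \<Longrightarrow> x \<noteq> y \<Longrightarrow> D \<le> \<bar>x - y\<bar>"
  shows "real (card X) * D \<le> t - s + D"
  using assms
proof (induction X arbitrary: t rule: finite_linorder_max_induct)
  case empty
  then show ?case by simp
next
  case (insert b A)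
  have b: "s \<le> b" "b \<le> t" using insert.prems(1) by auto
  have card: "card (insert b A) = card A + 1"
    using insert.hyps by (auto simp: card_insert_if)
  show ?case
  proof (cases "A = {}")
    case True
    then show ?thesis using b by simp
  next
    case False
    have "a \<le> b - D" if "a \<in> A" for a
      using insert.hyps(2) insert.prems(4)[of a b] that by fastforce
    then have A: "A \<subseteq> {s..b - D}" using insert.prems(1) by auto
    with False have "s \<le> b - D" by auto
    then have "real (card A) * D \<le> b - D - s + D"
      using insert.IH[OF A] insert.prems(3,4) by blast
    then show ?thesis using b card by (simp add: algebra_simps)
  qed
qed

lemma sum_le_of_separated:
  fixes x M :: "'a \<Rightarrow> real"
  assumes "finite Q" "x ` Q \<subseteq> {s..t}" "s \<le> t" "0 < D"
    and sep: "\<And>q q'. q \<in> Q \<Longrightarrow> q' \<in> Q \<Longrightarrow> q \<noteq> q' \<Longrightarrow> D \<le> \<bar>x q - x q'\<bar>"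
    and "\<And>q. q \<in> Q \<Longrightarrow> M q \<le> h" "0 \<le> h"
  shows "(\<Sum>q\<in>Q. M q) \<le> h * ((t - s) / D + 1)"
proof -
  have "inj_on x Q"
    using sep \<open>0 < D\<close> by (force simp: inj_on_def)
  then have "real (card Q) * D \<le> t - s + D"
    using card_mult_sep_le[of "x ` Q" s t D] assms by (force simp: card_image)
  then have card: "real (card Q) \<le> (t - s) / D + 1"
    using \<open>0 < D\<close> by (simp add: field_simps)
  have "(\<Sum>q\<in>Q. M q) \<le> real (card Q) * h"
    using sum_mono[of Q M "\<lambda>_. h"] assms(6) by simp
  also have "\<dots> \<le> h * ((t - s) / D + 1)"
    using mult_right_mono[OF card \<open>0 \<le> h\<close>] by (simp add: mult.commute)
  finally show ?thesis .
qed

lemma sum_dyadic_shell_le: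
  fixes x M :: "'a \<Rightarrow> real"
  assumes "finite Q" "x ` Q \<subseteq> {s..t}" "s \<le> t" "0 < C" "0 \<le> w" "0 < y"
    and sep: "\<And>q q'. q \<in> Q \<Longrightarrow> q' \<in> Q \<Longrightarrow> q \<noteq> q' \<Longrightarrow>
      C * min (M q) (M q') powr (1 + w) \<le> \<bar>x q - x q'\<bar>"
  shows "(\<Sum>q\<in>{q\<in>Q. y \<le> M q \<and> M q < 2 * y}. M q) \<le> 2 * (t - s) / (C * y powr w) + 2 * y"
proof -
  let ?shell = "{q\<in>Q. y \<le> M q \<and> M q < 2 * y}"
  have "C * y powr (1 + w) \<le> \<bar>x q - x q'\<bar>"
    if "q \<in> ?shell" "q' \<in> ?shell" "q \<noteq> q'" for q q'
  proof -
    have "C * y powr (1 + w) \<le> C * min (M q) (M q') powr (1 + w)"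
      using that \<open>0 < y\<close> \<open>0 \<le> w\<close> \<open>0 < C\<close> by (intro mult_left_mono powr_mono2) auto
    also have "\<dots> \<le> \<bar>x q - x q'\<bar>"
      using sep that by simp
    finally show ?thesis .
  qed
  then have "(\<Sum>q\<in>?shell. M q) \<le> 2 * y * ((t - s) / (C * y powr (1 + w)) + 1)"
    using assms(1-6) by (intro sum_le_of_separated[where x = x and s = s and t = t]) auto
  also have "\<dots> = 2 * (t - s) / (C * y powr w) + 2 * y"
    using \<open>0 < y\<close> \<open>0 < C\<close> by (simp add: powr_add field_simps)
  finally show ?thesis .
qed

lemma sum_below_dyadic_le:
  fixes x M :: "'a \<Rightarrow> real"
  assumes "finite Q" "x ` Q \<subseteq> {s..t}" "s \<le> t" "0 < R2" "0 < C" "0 \<le> w" "0 < a"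
    and "\<And>q. q \<in> Q \<Longrightarrow> 0 \<le> M q"
    and sep_R2: "\<And>q q'. q \<in> Q \<Longrightarrow> q' \<in> Q \<Longrightarrow> q \<noteq> q' \<Longrightarrow> R2 \<le> \<bar>x q - x q'\<bar>"
    and sep_C: "\<And>q q'. q \<in> Q \<Longrightarrow> q' \<in> Q \<Longrightarrow> q \<noteq> q' \<Longrightarrow>
      C * min (M q) (M q') powr (1 + w) \<le> \<bar>x q - x q'\<bar>"
  shows "(\<Sum>q\<in>{q\<in>Q. M q < a * 2 ^ k}. M q)
    \<le> a * ((t - s) / R2 + 1) + (\<Sum>j<k. 2 * (t - s) / (C * (a * 2 ^ j) powr w) + 2 * (a * 2 ^ j))"
proof (induction k)
  case 0
  show ?case
    using assms(1-4,7) sep_R2 by (simp, intro sum_le_of_separated[where x = x]) auto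
next
  case (Suc k)
  let ?y = "a * 2 ^ k"
  have "?y \<le> 2 * ?y" using \<open>0 < a\<close> by simp
  have split: "{q\<in>Q. M q < a * 2 ^ Suc k} = {q\<in>Q. M q < ?y} \<union> {q\<in>Q. ?y \<le> M q \<and> M q < 2 * ?y}"
    using \<open>?y \<le> 2 * ?y\<close> by auto
  have "(\<Sum>q\<in>{q\<in>Q. M q < a * 2 ^ Suc k}. M q)
      = (\<Sum>q\<in>{q\<in>Q. M q < ?y}. M q) + (\<Sum>q\<in>{q\<in>Q. ?y \<le> M q \<and> M q < 2 * ?y}. M q)"
    unfolding split using \<open>finite Q\<close> by (intro sum.union_disjoint) auto
  also have "\<dots> \<le> a * ((t - s) / R2 + 1)
      + (\<Sum>j<Suc k. 2 * (t - s) / (C * (a * 2 ^ j) powr w) + 2 * (a * 2 ^ j))"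
    using Suc.IH sum_dyadic_shell_le[OF assms(1,2,3,5,6), of ?y M] sep_C \<open>0 < a\<close> by simp
  finally show ?case .
qed

lemma ex_dyadic_between:
  fixes a y :: real
  assumes "0 < a" "a \<le> y"
  shows "\<exists>k. y \<le> a * 2 ^ k \<and> a * 2 ^ k < 2 * y"
proof -
  obtain n where "y / a < 2 ^ n"
    using real_arch_pow[of 2 "y / a"] by auto
  then have ex: "\<exists>k. y \<le> a * 2 ^ k"
    using \<open>0 < a\<close> by (auto simp: field_simps intro: less_imp_le)
  define k where "k = (LEAST k. y \<le> a * 2 ^ k)"
  have "y \<le> a * 2 ^ k"
    unfolding k_def using ex by (rule LeastI_ex)
  moreover have "a * 2 ^ k < 2 * y"
  proof (cases k)
    case 0
    then show ?thesis using assms by simp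
  next
    case (Suc k')
    then have "\<not> y \<le> a * 2 ^ k'"
      using not_less_Least[of k' "\<lambda>k. y \<le> a * 2 ^ k"] k_def by auto
    then show ?thesis using Suc by simp
  qed
  ultimately show ?thesis by blast
qed

lemma sum_inverse_dyadic_powr_le:
  fixes a w :: real
  assumes "0 < a" "0 < w"
  shows "(\<Sum>j<k. 1 / (a * 2 ^ j) powr w) \<le> 1 / ((1 - 2 powr - w) * a powr w)"
proof -
  define q :: real where "q = 2 powr - w"
  have q: "0 < q" "q < 1"
    unfolding q_def using \<open>0 < w\<close> powr_less_mono[of "- w" 0 2] by auto
  have "1 / (a * 2 ^ j) powr w = q ^ j / a powr w" for j
    using \<open>0 < a\<close> by (simp add: q_def powr_mult powr_minus powr_power powr_realpow[symmetric]
        powr_powr mult.commute power_inverse divide_inverse)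
  then have "(\<Sum>j<k. 1 / (a * 2 ^ j) powr w) = (\<Sum>j<k. q ^ j) / a powr w"
    by (simp add: sum_divide_distrib)
  also have "\<dots> = (1 - q ^ k) / (1 - q) / a powr w"
    using q by (simp add: sum_gp_strict)
  also have "\<dots> \<le> 1 / (1 - q) / a powr w"
    using q \<open>0 < a\<close> by (intro divide_right_mono) auto
  finally show ?thesis
    by (simp add: q_def)
qed

lemma sum_below_threshold_le:
  fixes x M :: "'a \<Rightarrow> real"
  assumes "finite Q" "x ` Q \<subseteq> {s..t}" "s \<le> t" "0 < R2" "0 < C" "0 < w" "0 < a" "a \<le> \<eta>"
    and nonneg: "\<And>q. q \<in> Q \<Longrightarrow> 0 \<le> M q"
    and sep_R2: "\<And>q q'. q \<in> Q \<Longrightarrow> q' \<in> Q \<Longrightarrow> q \<noteq> q' \<Longrightarrow> R2 \<le> \<bar>x q - x q'\<bar>"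
    and sep_C: "\<And>q q'. q \<in> Q \<Longrightarrow> q' \<in> Q \<Longrightarrow> q \<noteq> q' \<Longrightarrow>
      C * min (M q) (M q') powr (1 + w) \<le> \<bar>x q - x q'\<bar>"
  shows "(\<Sum>q\<in>{q\<in>Q. M q < \<eta>}. M q)
    \<le> a * ((t - s) / R2 + 1) + 2 * (t - s) / (C * (1 - 2 powr - w) * a powr w) + 4 * \<eta>"
proof -
  obtain k where k: "\<eta> \<le> a * 2 ^ k" "a * 2 ^ k < 2 * \<eta>"
    using ex_dyadic_between[OF \<open>0 < a\<close> \<open>a \<le> \<eta>\<close>] by blast
  have "(\<Sum>q\<in>{q\<in>Q. M q < \<eta>}. M q) \<le> (\<Sum>q\<in>{q\<in>Q. M q < a * 2 ^ k}. M q)"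
    using \<open>finite Q\<close> k(1) nonneg by (intro sum_mono2) auto
  also have "\<dots> \<le> a * ((t - s) / R2 + 1)
      + (\<Sum>j<k. 2 * (t - s) / (C * (a * 2 ^ j) powr w) + 2 * (a * 2 ^ j))"
    using sum_below_dyadic_le[OF assms(1-5) _ \<open>0 < a\<close>] \<open>0 < w\<close> nonneg sep_R2 sep_C by simp
  also have "(\<Sum>j<k. 2 * (t - s) / (C * (a * 2 ^ j) powr w) + 2 * (a * 2 ^ j))
      = 2 * (t - s) / C * (\<Sum>j<k. 1 / (a * 2 ^ j) powr w) + 2 * a * (\<Sum>j<k. 2 ^ j)"
    by (simp add: sum.distrib sum_distrib_left mult.assoc)
  also have "\<dots> \<le> 2 * (t - s) / C * (1 / ((1 - 2 powr - w) * a powr w)) + 2 * a * 2 ^ k"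
  proof (intro add_mono mult_left_mono)
    show "(\<Sum>j<k. 1 / (a * 2 ^ j) powr w) \<le> 1 / ((1 - 2 powr - w) * a powr w)"
      using sum_inverse_dyadic_powr_le[OF \<open>0 < a\<close> \<open>0 < w\<close>] .
    show "(\<Sum>j<k. 2 ^ j) \<le> (2::real) ^ k"
      by (simp add: sum_gp_strict)
  qed (use assms in auto)
  also have "2 * a * 2 ^ k \<le> 4 * \<eta>"
    using k(2) by simp
  finally show ?thesis
    by (simp add: field_simps)
qed

lemma sum_light_weights_le:
  fixes x M :: "'a \<Rightarrow> real" and N :: real
  assumes "finite Q" "x ` Q \<subseteq> {s..t}" "0 < R2" "R2 \<le> t - s" "0 < C" "0 < w" "0 < N"
    and nonneg: "\<And>q. q \<in> Q \<Longrightarrow> 0 \<le> M q"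
    and sep_R2: "\<And>q q'. q \<in> Q \<Longrightarrow> q' \<in> Q \<Longrightarrow> q \<noteq> q' \<Longrightarrow> R2 \<le> \<bar>x q - x q'\<bar>"
    and sep_C: "\<And>q q'. q \<in> Q \<Longrightarrow> q' \<in> Q \<Longrightarrow> q \<noteq> q' \<Longrightarrow>
      C * min (M q) (M q') powr (1 + w) \<le> \<bar>x q - x q'\<bar>"
    and R2_large: "160 * N \<le> C * (1 - 2 powr - w) * (R2 / (160 * N)) powr w"
  shows "(\<Sum>q\<in>{q\<in>Q. M q < (t - s) / (160 * N)}. M q) \<le> (t - s) / (20 * N)"
proof -
  define R \<eta> a where "R = t - s" and "\<eta> = R / (160 * N)" and "a = R2 / (160 * N)"
  have a: "0 < a" "a \<le> \<eta>"
    using assms(3,4,7) by (auto simp: a_def \<eta>_def R_def divide_right_mono)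
  have "(\<Sum>q\<in>{q\<in>Q. M q < \<eta>}. M q)
      \<le> a * (R / R2 + 1) + 2 * R / (C * (1 - 2 powr - w) * a powr w) + 4 * \<eta>"
    unfolding R_def
    using sum_below_threshold_le[OF assms(1,2) _ assms(3,5,6) a] assms(3,4) nonneg sep_R2 sep_C
    by simp
  also have "a * (R / R2 + 1) = \<eta> + a"
    using \<open>0 < R2\<close> \<open>0 < N\<close> by (simp add: a_def \<eta>_def field_simps)
  also have "2 * R / (C * (1 - 2 powr - w) * a powr w) \<le> 2 * R / (160 * N)"
    using R2_large assms(3,4,7) unfolding a_def R_def by (intro divide_left_mono) auto
  also have "\<eta> + a + 2 * R / (160 * N) + 4 * \<eta> \<le> R / (20 * N)"
    using a by (simp add: \<eta>_def)
  finally show ?thesis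
    by (simp add: \<eta>_def R_def)
qed

lemma at_most_one_heavy:
  fixes x M :: "'a \<Rightarrow> real"
  assumes "x ` Q \<subseteq> {s..<t}" "0 < C" "0 \<le> w" "0 \<le> \<eta>"
    and sep_C: "\<And>q q'. q \<in> Q \<Longrightarrow> q' \<in> Q \<Longrightarrow> q \<noteq> q' \<Longrightarrow>
      C * min (M q) (M q') powr (1 + w) \<le> \<bar>x q - x q'\<bar>"
    and \<eta>_large: "t - s \<le> C * \<eta> powr (1 + w)"
    and "q \<in> Q" "q' \<in> Q" "\<eta> \<le> M q" "\<eta> \<le> M q'"
  shows "q = q'"
proof (rule ccontr)
  assume "q \<noteq> q'"
  have "t - s \<le> C * \<eta> powr (1 + w)"
    by (fact \<eta>_large)
  also have "\<dots> \<le> C * min (M q) (M q') powr (1 + w)"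
    using assms(2,3,4,9,10) by (intro mult_left_mono powr_mono2) auto
  also have "\<dots> \<le> \<bar>x q - x q'\<bar>"
    using sep_C[OF \<open>q \<in> Q\<close> \<open>q' \<in> Q\<close> \<open>q \<noteq> q'\<close>] .
  finally have "t - s \<le> \<bar>x q - x q'\<bar>" .
  moreover have "x q \<in> {s..<t}" "x q' \<in> {s..<t}"
    using assms(1,7,8) by auto
  then have "\<bar>x q - x q'\<bar> < t - s"
    by auto
  ultimately show False by simp
qed

lemma dominant_weight:
  fixes x M S :: "'a \<Rightarrow> real" and N :: real
  assumes "finite Q" "x ` Q \<subseteq> {s..<t}" "0 < R2" "R2 \<le> t - s" "0 < C" "0 < w" "0 < N"
    and nonneg: "\<And>q. q \<in> Q \<Longrightarrow> 0 \<le> M q"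
    and sep_R2: "\<And>q q'. q \<in> Q \<Longrightarrow> q' \<in> Q \<Longrightarrow> q \<noteq> q' \<Longrightarrow> R2 \<le> \<bar>x q - x q'\<bar>"
    and sep_C: "\<And>q q'. q \<in> Q \<Longrightarrow> q' \<in> Q \<Longrightarrow> q \<noteq> q' \<Longrightarrow>
      C * min (M q) (M q') powr (1 + w) \<le> \<bar>x q - x q'\<bar>"
    and R2_large: "160 * N \<le> C * (1 - 2 powr - w) * (R2 / (160 * N)) powr w"
    and R_large: "t - s \<le> C * ((t - s) / (160 * N)) powr (1 + w)"
    and S_le: "\<And>q. q \<in> Q \<Longrightarrow> S q \<le> N * M q"
    and total: "4 / 5 * (t - s) \<le> (\<Sum>q\<in>Q. S q)"
  shows "\<exists>q\<in>Q. 3 / 4 * (t - s) \<le> S q \<and> (t - s) / (32 * N) \<le> M q"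
proof -
  define R \<eta> where "R = t - s" and "\<eta> = R / (160 * N)"
  have "0 < R" "0 \<le> \<eta>"
    using assms(3,4,7) by (auto simp: \<eta>_def R_def)
  let ?light = "{q\<in>Q. M q < \<eta>}" and ?heavy = "{q\<in>Q. \<eta> \<le> M q}"
  have "(\<Sum>q\<in>?light. S q) \<le> N * (\<Sum>q\<in>?light. M q)"
    using S_le by (simp add: sum_distrib_left, intro sum_mono) auto
  also have "\<dots> \<le> N * (R / (20 * N))"
    using sum_light_weights_le[OF \<open>finite Q\<close> _ assms(3-7) nonneg sep_R2 sep_C R2_large] assms(2,7)
    unfolding R_def \<eta>_def by (intro mult_left_mono) fastforce+
  finally have light: "(\<Sum>q\<in>?light. S q) \<le> R / 20"
    using \<open>0 < N\<close> by simp
  have "(\<Sum>q\<in>Q. S q) = (\<Sum>q\<in>?light. S q) + (\<Sum>q\<in>?heavy. S q)"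
    using \<open>finite Q\<close> by (subst sum.union_disjoint[symmetric]) (auto intro: sum.cong)
  with light total have heavy: "3 / 4 * R \<le> (\<Sum>q\<in>?heavy. S q)"
    unfolding R_def by linarith
  then have "(\<Sum>q\<in>?heavy. S q) \<noteq> 0"
    using \<open>0 < R\<close> by linarith
  then obtain p where p: "p \<in> ?heavy"
    using sum.not_neutral_contains_not_neutral by blast
  have "?heavy = {p}"
    using at_most_one_heavy[OF assms(2,5) _ \<open>0 \<le> \<eta>\<close> sep_C] R_large p \<open>0 < w\<close>
    unfolding \<eta>_def R_def by auto
  with heavy have "3 / 4 * R \<le> S p"
    by simp
  moreover have "R / (32 * N) \<le> M p"
    using \<open>3 / 4 * R \<le> S p\<close> S_le[of p] p \<open>0 < R\<close> \<open>0 < N\<close> by (auto simp: field_simps)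
  ultimately show ?thesis
    using p unfolding R_def by blast
qed

lemma ex_greatest_less:
  fixes f :: "nat \<Rightarrow> 'b::linorder"
  assumes "0 < n"
  shows "\<exists>i<n. \<forall>j<n. f j \<le> f i"
proof -
  have "Max (f ` {..<n}) \<in> f ` {..<n}"
    using assms by (intro Max_in) auto
  then obtain i where "i < n" "Max (f ` {..<n}) = f i"
    by auto
  moreover have "f j \<le> Max (f ` {..<n})" if "j < n" for j
    using that by (intro Max_ge) auto
  ultimately show ?thesis
    by metis
qed

lemma ivl_dist_le_dist_fst:
  assumes "fst J \<le> snd J" "fst J' \<le> snd J'"
  shows "ivl_dist J J' \<le> \<bar>fst J - fst J'\<bar>"
  unfolding ivl_dist_def
proof (rule cInf_lower)
  show "\<bar>fst J - fst J'\<bar> \<in> {\<bar>s - t\<bar> |s t. s \<in> ivl J \<and> t \<in> ivl J'}"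
    using assms unfolding ivl_def by auto
  show "bdd_below {\<bar>s - t\<bar> |s t. s \<in> ivl J \<and> t \<in> ivl J'}"
    by (rule bdd_belowI[where m = 0]) auto
qed

lemma part_fam_Inr_bounds:
  assumes "\<forall>k \<in> part_idx n0 m n. fst (part_fam G B k) < snd (part_fam G B k)"
    and "(\<Union>k \<in> part_idx n0 m n. ivl (part_fam G B k)) = {s..t}"
    and "p < m" "i < n p"
  shows "s \<le> fst (B p i) \<and> fst (B p i) < snd (B p i) \<and> snd (B p i) \<le> t"
proof -
  have k: "Inr (p, i) \<in> part_idx n0 m n"
    using assms(3,4) unfolding part_idx_def by auto
  have fam: "part_fam G B (Inr (p, i)) = B p i"
    by (simp add: part_fam_def)
  have "fst (B p i) < snd (B p i)"
    using bspec[OF assms(1) k] fam by simp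
  moreover have "ivl (B p i) \<subseteq> {s..t}"
    using UN_upper[OF k, of "\<lambda>k. ivl (part_fam G B k)"] assms(2) fam by simp
  ultimately show ?thesis
    unfolding ivl_def by auto
qed

lemma dominant_cluster:
  fixes C w R2 s t :: real and nmax n0 m :: nat and n :: "nat \<Rightarrow> nat"
    and G :: "nat \<Rightarrow> real \<times> real" and B :: "nat \<Rightarrow> nat \<Rightarrow> real \<times> real"
  assumes "0 < C" "0 < w" "0 < nmax" "0 < R2" "R2 \<le> t - s"
    and R2_large: "160 * real nmax \<le> C * (1 - 2 powr - w) * (R2 / (160 * real nmax)) powr w"
    and R_large: "t - s \<le> C * ((t - s) / (160 * real nmax)) powr (1 + w)"
    and nonempty: "\<forall>k \<in> part_idx n0 m n. fst (part_fam G B k) < snd (part_fam G B k)"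
    and covers: "(\<Union>k \<in> part_idx n0 m n. ivl (part_fam G B k)) = {s..t}"
    and cluster_size: "\<forall>p < m. n p \<le> nmax"
    and total: "4 / 5 * (t - s) \<le> (\<Sum>p<m. \<Sum>i<n p. len (B p i))"
    and sep: "\<forall>p < m. \<forall>q < m. \<forall>i < n p. \<forall>j < n q. p \<noteq> q \<longrightarrow>
      ivl_dist (B p i) (B q j) \<ge> max R2 (C * (min (len (B p i)) (len (B q j))) powr (1 + w))"
  shows "\<exists>j0 < m. \<exists>i0 < n j0. len (B j0 i0) \<ge> (t - s) / (32 * real nmax) \<and>
    (\<Sum>i<n j0. len (B j0 i)) \<ge> 3 / 4 * (t - s)"
proof -
  define Q where "Q = {p. p < m \<and> 0 < n p}"
  have "\<exists>i<n p. \<forall>j<n p. len (B p j) \<le> len (B p i)" if "p \<in> Q" for p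
    using that ex_greatest_less[of "n p" "\<lambda>i. len (B p i)"] unfolding Q_def by simp
  then obtain longest where longest:
    "\<And>p. p \<in> Q \<Longrightarrow> longest p < n p \<and> (\<forall>j<n p. len (B p j) \<le> len (B p (longest p)))"
    by metis
  define M x S where "M p = len (B p (longest p))" and "x p = fst (B p (longest p))"
    and "S p = (\<Sum>i<n p. len (B p i))" for p
  have bounds: "s \<le> fst (B p i) \<and> fst (B p i) < snd (B p i) \<and> snd (B p i) \<le> t"
    if "p < m" "i < n p" for p i
    using part_fam_Inr_bounds[OF nonempty covers that] .
  have Q: "p < m" "longest p < n p" if "p \<in> Q" for p
    using that longest unfolding Q_def by auto
  have x_range: "x ` Q \<subseteq> {s..<t}"
    using bounds Q unfolding x_def by fastforce
  have nonneg: "0 \<le> M p" if "p \<in> Q" for p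
    using bounds[OF Q[OF that]] unfolding M_def len_def by simp
  have sep_Q: "max R2 (C * min (M p) (M q) powr (1 + w)) \<le> \<bar>x p - x q\<bar>"
    if "p \<in> Q" "q \<in> Q" "p \<noteq> q" for p q
  proof -
    have "max R2 (C * min (M p) (M q) powr (1 + w)) \<le> ivl_dist (B p (longest p)) (B q (longest q))"
      using sep[rule_format, OF Q(1)[OF that(1)] Q(1)[OF that(2)] Q(2)[OF that(1)] Q(2)[OF that(2)]
          that(3)]
      unfolding M_def by simp
    also have "\<dots> \<le> \<bar>x p - x q\<bar>"
      unfolding x_def using bounds Q that by (intro ivl_dist_le_dist_fst) (auto intro: less_imp_le)
    finally show ?thesis .
  qed
  have S_le: "S p \<le> real nmax * M p" if "p \<in> Q" for p
  proof -
    have "S p \<le> (\<Sum>i<n p. M p)"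
      unfolding S_def M_def using longest[OF that] by (intro sum_mono) auto
    also have "\<dots> \<le> real nmax * M p"
      using cluster_size Q[OF that] nonneg[OF that] by (simp add: mult_right_mono)
    finally show ?thesis .
  qed
  have "(\<Sum>p<m. S p) = (\<Sum>p\<in>Q. S p)"
    unfolding S_def Q_def by (intro sum.mono_neutral_right) auto
  then have total_Q: "4 / 5 * (t - s) \<le> (\<Sum>p\<in>Q. S p)"
    using total unfolding S_def by simp
  have "finite Q"
    unfolding Q_def by simp
  have "\<exists>p\<in>Q. 3 / 4 * (t - s) \<le> S p \<and> (t - s) / (32 * real nmax) \<le> M p"
    by (rule dominant_weight[OF \<open>finite Q\<close> x_range assms(4,5,1,2) _ nonneg _ _ R2_large R_large
          S_le total_Q])
      (use sep_Q \<open>0 < nmax\<close> in auto)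
  then show ?thesis
    using Q unfolding S_def M_def by blast
qed

lemma eventually_powr_div_ge_at_top:
  fixes c w K :: real
  assumes "0 < c" "0 < w"
  shows "\<forall>\<^sub>F x in at_top. K \<le> (x / c) powr w"
proof -
  have "K \<le> (x / c) powr w" if "c * max 1 K powr (1 / w) \<le> x" for x
  proof -
    have "max 1 K = (max 1 K powr (1 / w)) powr w"
      using \<open>0 < w\<close> by (simp add: powr_powr)
    also have "\<dots> \<le> (x / c) powr w"
      using that assms by (intro powr_mono2) (auto simp: field_simps)
    finally show ?thesis
      by simp
  qed
  then show ?thesis
    unfolding eventually_at_top_linorder by blast
qed

lemma scale_threshold_exists:
  fixes C w N :: real
  assumes "0 < C" "0 < w" "0 < N"
  shows "\<exists>R2>0. 160 * N \<le> C * (1 - 2 powr - w) * (R2 / (160 * N)) powr w \<and>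
    (\<forall>R\<ge>R2. R \<le> C * (R / (160 * N)) powr (1 + w))"
proof -
  define c where "c = 160 * N"
  have "0 < c" "0 < 1 - 2 powr - w"
    using assms powr_less_mono[of "- w" 0 2] by (auto simp: c_def)
  have "\<forall>\<^sub>F R in at_top. c \<le> C * (1 - 2 powr - w) * (R / c) powr w"
    using eventually_powr_div_ge_at_top[OF \<open>0 < c\<close> \<open>0 < w\<close>, of "c / (C * (1 - 2 powr - w))"]
    by eventually_elim (use \<open>0 < C\<close> \<open>0 < 1 - 2 powr - w\<close> in \<open>simp add: field_simps\<close>)
  moreover have "\<forall>\<^sub>F R in at_top. R \<le> C * (R / c) powr (1 + w)"
    using eventually_powr_div_ge_at_top[OF \<open>0 < c\<close> \<open>0 < w\<close>, of "c / C"] eventually_gt_at_top[of 0]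
  proof eventually_elim
    case (elim R)
    then have "R \<le> C * (R / c) * (R / c) powr w"
      using \<open>0 < C\<close> \<open>0 < c\<close> by (simp add: field_simps)
    then show ?case
      using elim \<open>0 < c\<close> by (simp add: powr_add mult.assoc)
  qed
  ultimately have "\<forall>\<^sub>F R in at_top. 0 < R \<and> c \<le> C * (1 - 2 powr - w) * (R / c) powr w \<and>
      R \<le> C * (R / c) powr (1 + w)"
    using eventually_gt_at_top[of 0] by eventually_elim blast
  then obtain R2 where "\<forall>R\<ge>R2. 0 < R \<and> c \<le> C * (1 - 2 powr - w) * (R / c) powr w \<and>
      R \<le> C * (R / c) powr (1 + w)"
    unfolding eventually_at_top_linorder by blast
  then show ?thesis
    unfolding c_def by blast
qed

theorem lemma5p3:
  fixes C w :: real and nmax :: nat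
  assumes "C > 0" and "w > 0" and "nmax > 0"
  shows "\<exists>R2 > 0. \<forall>\<epsilon> :: real. \<forall>s t R :: real. \<forall>n0 m :: nat. \<forall>n :: nat \<Rightarrow> nat.
     \<forall>G :: nat \<Rightarrow> real \<times> real. \<forall>B :: nat \<Rightarrow> nat \<Rightarrow> real \<times> real.
       0 < \<epsilon> \<and> \<epsilon> < 10 powr (-3) \<and>
       R = t - s \<and> R \<ge> R2 \<and>
       (\<forall>k \<in> part_idx n0 m n. fst (part_fam G B k) < snd (part_fam G B k)) \<and>
       (\<Union>k \<in> part_idx n0 m n. ivl (part_fam G B k)) = {s..t} \<and>
       (\<forall>k \<in> part_idx n0 m n. \<forall>k' \<in> part_idx n0 m n. k \<noteq> k' \<longrightarrow>
           ivl_interior (part_fam G B k) \<inter> ivl_interior (part_fam G B k') = {}) \<and>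
       (\<forall>p < m. n p \<le> nmax) \<and>
       (\<Sum>p<m. \<Sum>i<n p. len (B p i)) \<ge> (1 - \<epsilon>) * R \<and>
       (\<forall>p < m. \<forall>q < m. \<forall>i < n p. \<forall>j < n q. p \<noteq> q \<longrightarrow>
           ivl_dist (B p i) (B q j) \<ge>
             max R2 (C * (min (len (B p i)) (len (B q j))) powr (1 + w)))
     \<longrightarrow> (\<exists>j0 < m. \<exists>i0 < n j0. len (B j0 i0) \<ge> R / (32 * real nmax) \<and>
             (\<Sum>i<n j0. len (B j0 i)) \<ge> 3 / 4 * R)"
proof -
  obtain R2 where "0 < R2"
    and R2_large: "160 * real nmax \<le> C * (1 - 2 powr - w) * (R2 / (160 * real nmax)) powr w"
    and R_large: "\<forall>R\<ge>R2. R \<le> C * (R / (160 * real nmax)) powr (1 + w)"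
    using scale_threshold_exists[of C w "real nmax"] assms by auto
  show ?thesis
  proof (intro exI[of _ R2] conjI \<open>0 < R2\<close> allI impI, elim conjE, goal_cases)
    case hyps: (1 \<epsilon> s t R n0 m n G B)
    have "4 / 5 * R \<le> (1 - \<epsilon>) * R"
      using hyps(2,4) \<open>0 < R2\<close> by (intro mult_right_mono) (auto simp: powr_minus)
    then show ?case
      using dominant_cluster[OF assms \<open>0 < R2\<close> _ R2_large, of t s n0 m n G B] R_large hyps
      by auto
  qed
qed

end
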